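(* Let $a>-1$, $C>0$ and $c>0$ be constants. Let $g:[0,1]\to\mathbb{R}$ be a function of the form $g(x)=\sum_{n=1}^\infty g_nx^n$ with $|g_n|\le Cn^a$ for all $n\ge1$. Let $P\ge1$ and let $\hat x_1,\dots,\hat x_P$ be the Chebyshev nodes of the first kind shifted and scaled to the interval $[0,1/(1+c)]$, i.e. $\hat x_i=\frac{1+\cos\left(\frac{(2i-1)\pi}{2P}\right)}{2(1+c)}$. Let $\epsilon>0$. If $|g(\hat x_i)|<\epsilon$ for all $i=1,\dots,P$, then for all $x\in[0,1/(1+c)]$, $$|g(x)|\le D\,(\log(P+1)+1)\left(\epsilon+\frac{\zeta^{-P}}{\zeta-1}\right),$$ where $\zeta=c+1+\sqrt{c^2+2c}$ and $D$ is a constant depending only on $a$, $c$ and $C$. *)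

theory Defs
  imports Complex_Main
begin

definition g_series :: "(nat \<Rightarrow> real) \<Rightarrow> real \<Rightarrow> real" where
  "g_series gc x = (\<Sum>n. gc (Suc n) * x ^ Suc n)"

definition cheb_node :: "real \<Rightarrow> nat \<Rightarrow> nat \<Rightarrow> real" where
  "cheb_node c P i = (1 + cos ((2 * real i - 1) * pi / (2 * real P))) / (2 * (1 + c))"

definition zeta :: "real \<Rightarrow> real" where
  "zeta c = c + 1 + sqrt (c\<^sup>2 + 2 * c)"

end

(* Substituting x = (1 + cos t) / (2 (1 + c)) maps [0, pi] onto [0, 1/(1+c)] and the Chebyshev
   nodes to the angles theta_i = (2i - 1) pi / (2P). Expanding ((1 + cos t)/2)^n binomially,
   x^n becomes a cosine polynomial with nonnegative coefficients, which we split into the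
   frequencies |j - n| < P and the rest. Because zeta + 1/zeta = 2 (c + 1), the high frequencies
   of x^n are bounded by 2 r^n zeta^(-P) with r = (c + 2) / (2 (c + 1)) < 1, so in g they add up
   to at most E = 2 S zeta^(-P), where S = sum |g_n| r^n. The low-frequency part h of g is a
   cosine polynomial of degree < P, hence equal to its discrete cosine interpolant at the
   theta_i, whose Lebesgue constant is O(log P) by the usual Dirichlet kernel estimate. Since
   |h| <= eps + E at the nodes, |g| <= 16 H_P (eps + E) + E on the whole interval. *)

theory Submission
  imports Defs "HOL-Analysis.Harmonic_Numbers" "HOL-Real_Asymp.Real_Asymp"
begin

section \<open>Harmonic sums\<close>

lemma harm_le_ln_plus_one:
  assumes "n \<ge> 1"
  shows "harm n \<le> ln (real n) + (1 :: real)"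
  using assms
proof (induction n rule: nat_induct_at_least)
  case base
  then show ?case by (simp add: harm_expand)
next
  case (Suc n)
  have n: "real n > 0" using Suc by simp
  have "ln (real n / real (Suc n)) \<le> real n / real (Suc n) - 1"
    using n by (intro ln_le_minus_one) simp
  also have "\<dots> = - 1 / real (Suc n)" by (simp add: field_simps)
  finally have "1 / real (Suc n) \<le> ln (real (Suc n)) - ln (real n)"
    using n by (simp add: ln_div)
  then show ?case using Suc by (simp add: harm_Suc inverse_eq_divide)
qed

lemma sum_inverse_le_harm:
  assumes "finite S" "0 \<notin> S"
  shows "(\<Sum>j\<in>S. 1 / real j) \<le> harm (card S)"
  using assms
proof (induction "card S" arbitrary: S)
  case 0
  then show ?case by (simp add: harm_expand)
next
  case (Suc n S)
  define M where "M = Max S"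
  have "S \<noteq> {}" using Suc(2) by auto
  then have M: "M \<in> S" "\<And>j. j \<in> S \<Longrightarrow> j \<le> M"
    using Suc(3) by (simp_all add: M_def)
  have "S \<subseteq> {1..M}" using M Suc(4) by (auto simp: Suc_le_eq) (metis gr0I)
  then have "Suc n \<le> M" using Suc(2) card_mono[of "{1..M}" S] by simp
  have "(\<Sum>j\<in>S. 1 / real j) = (\<Sum>j\<in>S - {M}. 1 / real j) + 1 / real M"
    by (simp add: sum.remove[OF Suc(3) M(1)] add.commute)
  also have "\<dots> \<le> harm n + 1 / real (Suc n)"
  proof (rule add_mono)
    show "(\<Sum>j\<in>S - {M}. 1 / real j) \<le> harm n"
    proof -
      have "card (S - {M}) = n" using Suc(2) M(1) by simp
      then show ?thesis using Suc(1)[of "S - {M}"] Suc(3,4) by simp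
    qed
    show "1 / real M \<le> 1 / real (Suc n)"
      using \<open>Suc n \<le> M\<close> by (intro divide_left_mono) auto
  qed
  also have "\<dots> = harm (card S)"
    by (simp add: Suc(2)[symmetric] harm_Suc inverse_eq_divide)
  finally show ?case .
qed

lemma sum_inverse_shift_le_harm:
  fixes I :: "int set" and s :: real
  assumes "finite I" "\<And>i. i \<in> I \<Longrightarrow> s \<le> of_int i"
  shows "(\<Sum>i\<in>I. 1 / (of_int i - s + 1)) \<le> harm (card I)"
proof -
  define f where "f i = nat (i - \<lceil>s\<rceil> + 1)" for i
  have ceil: "\<lceil>s\<rceil> \<le> i" if "i \<in> I" for i
    using assms(2)[OF that] by (simp add: ceiling_le_iff)
  have "inj_on f I"
    by (rule inj_onI) (use ceil in \<open>force simp: f_def\<close>)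
  have "(\<Sum>i\<in>I. 1 / (of_int i - s + 1)) \<le> (\<Sum>i\<in>I. 1 / real (f i))"
  proof (rule sum_mono)
    fix i assume "i \<in> I"
    then have "real (f i) = of_int i - of_int \<lceil>s\<rceil> + 1" "\<lceil>s\<rceil> \<le> i" "s \<le> of_int i"
      using ceil assms(2) by (simp_all add: f_def)
    then show "1 / (of_int i - s + 1) \<le> 1 / real (f i)"
      by (intro divide_left_mono mult_pos_pos) auto
  qed
  also have "\<dots> = (\<Sum>j\<in>f ` I. 1 / real j)"
    by (simp add: sum.reindex[OF \<open>inj_on f I\<close>])
  also have "\<dots> \<le> harm (card (f ` I))"
    using assms(1) by (intro sum_inverse_le_harm) (force simp: f_def dest: ceil)+
  also have "card (f ` I) = card I"
    using card_image[OF \<open>inj_on f I\<close>] .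
  finally show ?thesis .
qed

lemma sum_inverse_dist_le_harm:
  fixes s :: real
  shows "(\<Sum>i=1..N. 1 / (\<bar>s - real i\<bar> + 1)) \<le> 2 * harm N"
proof -
  define A where "A = {i \<in> {1..N}. s \<le> real i}"
  define B where "B = {1..N} - A"
  have "A \<subseteq> {1..N}" "B \<subseteq> {1..N}" by (auto simp: A_def B_def)
  then have "card A \<le> N" "card B \<le> N"
    using card_mono[OF finite_atLeastAtMost, of _ 1 N] by fastforce+
  have "(\<Sum>i\<in>A. 1 / (\<bar>s - real i\<bar> + 1)) = (\<Sum>i\<in>int ` A. 1 / (of_int i - s + 1))"
    by (subst sum.reindex) (auto simp: A_def)
  also have "\<dots> \<le> harm (card (int ` A))"
    by (rule sum_inverse_shift_le_harm) (auto simp: A_def)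
  also have "card (int ` A) = card A"
    by (simp add: card_image)
  also have "harm (card A) \<le> (harm N :: real)"
    using \<open>card A \<le> N\<close> by (rule harm_mono)
  finally have sum_A: "(\<Sum>i\<in>A. 1 / (\<bar>s - real i\<bar> + 1)) \<le> harm N" .
  have "(\<Sum>i\<in>B. 1 / (\<bar>s - real i\<bar> + 1)) = (\<Sum>i\<in>(\<lambda>i. - int i) ` B. 1 / (of_int i - (- s) + 1))"
    by (subst sum.reindex) (auto simp: A_def B_def inj_on_def intro!: sum.cong)
  also have "\<dots> \<le> harm (card ((\<lambda>i. - int i) ` B))"
    by (rule sum_inverse_shift_le_harm) (auto simp: A_def B_def)
  also have "card ((\<lambda>i. - int i) ` B) = card B"
    by (simp add: card_image inj_on_def)
  also have "harm (card B) \<le> (harm N :: real)"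
    using \<open>card B \<le> N\<close> by (rule harm_mono)
  finally have sum_B: "(\<Sum>i\<in>B. 1 / (\<bar>s - real i\<bar> + 1)) \<le> harm N" .
  have "(\<Sum>i=1..N. 1 / (\<bar>s - real i\<bar> + 1))
      = (\<Sum>i\<in>B. 1 / (\<bar>s - real i\<bar> + 1)) + (\<Sum>i\<in>A. 1 / (\<bar>s - real i\<bar> + 1))"
    unfolding B_def by (rule sum.subset_diff) (auto simp: A_def)
  then show ?thesis using sum_A sum_B by linarith
qed

lemma sum_inverse_rev_eq_harm: "(\<Sum>i=1..N. 1 / (real N + 1 - real i)) = harm N"
proof -
  have "(\<Sum>i=1..N. 1 / (real N + 1 - real i)) = (\<Sum>i=1..N. 1 / (real N + 1 - real (N + 1 - i)))"
    by (rule sum.atLeastAtMost_rev)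
  also have "\<dots> = harm N"
    unfolding harm_def by (intro sum.cong) (auto simp: of_nat_diff inverse_eq_divide)
  finally show ?thesis .
qed

section \<open>The Dirichlet kernel\<close>

definition dirichlet_kernel :: "nat \<Rightarrow> real \<Rightarrow> real" where
  "dirichlet_kernel N u = 1 + 2 * (\<Sum>j=1..<N. cos (real j * u))"

lemma abs_dirichlet_kernel_le:
  assumes "N \<ge> 1"
  shows "\<bar>dirichlet_kernel N u\<bar> \<le> 2 * real N"
proof -
  have "\<bar>\<Sum>j=1..<N. cos (real j * u)\<bar> \<le> (\<Sum>j=1..<N. 1)"
    by (rule order.trans[OF sum_abs sum_mono]) simp
  then show ?thesis using assms by (simp add: dirichlet_kernel_def)
qed

lemma dirichlet_kernel_mult_sin:
  "dirichlet_kernel (Suc n) u * sin (u / 2) = sin ((real n + 1 / 2) * u)"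
proof (induction n)
  case 0
  then show ?case by (simp add: dirichlet_kernel_def)
next
  case (Suc n)
  have "2 * cos (real (Suc n) * u) * sin (u / 2)
      = sin (real (Suc n) * u + u / 2) - sin (real (Suc n) * u - u / 2)"
    by (simp add: sin_add sin_diff)
  also have "\<dots> = sin ((real (Suc n) + 1 / 2) * u) - sin ((real n + 1 / 2) * u)"
    by (simp add: algebra_simps)
  finally show ?case
    using Suc by (simp add: dirichlet_kernel_def algebra_simps)
qed

lemma dirichlet_kernel_periodic: "dirichlet_kernel N (u - 2 * pi) = dirichlet_kernel N u"
proof -
  have "cos (real j * (u - 2 * pi)) = cos (real j * u)" for j
    using cos_integer_2pi[of "real j"] sin_integer_2pi[of "real j"]
    by (simp add: right_diff_distrib cos_diff mult.commute mult.left_commute)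
  then show ?thesis by (simp add: dirichlet_kernel_def)
qed

lemma quarter_le_sin:
  assumes "0 \<le> y" "y \<le> pi / 2"
  shows "y / 4 \<le> sin y"
proof (cases "y \<le> pi / 3")
  case True
  show ?thesis
  proof (cases "y = 0")
    case False
    then obtain z where z: "0 < z" "z < y" "sin y - sin 0 = (y - 0) * cos z"
      using MVT2[of 0 y sin cos] assms by (auto intro: DERIV_sin)
    have "1 / 2 \<le> cos z"
      using cos_monotone_0_pi_le[of z "pi / 3"] z True by (simp add: cos_60)
    then show ?thesis using z by (simp add: mult_left_mono[of "1 / 2" "cos z" y, simplified])
  qed simp
next
  case False
  then have "sqrt 3 / 2 \<le> sin y"
    using sin_monotone_2pi_le[of "pi / 3" y] assms by (simp add: sin_60)
  moreover have "1 \<le> sqrt 3" by simp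
  moreover have "y / 4 \<le> 1 / 2" using assms pi_less_4 by simp
  ultimately show ?thesis by linarith
qed

lemma abs_sin_half_ge:
  assumes "\<bar>u\<bar> \<le> pi"
  shows "\<bar>u\<bar> / 8 \<le> \<bar>sin (u / 2)\<bar>"
  using quarter_le_sin[of "\<bar>u\<bar> / 2"] assms by (cases "u \<ge> 0") auto

lemma abs_dirichlet_kernel_le_inverse:
  assumes "N \<ge> 1" "\<bar>u\<bar> \<le> pi" "0 < d" "d \<le> real N * \<bar>u\<bar> / pi + 1"
  shows "\<bar>dirichlet_kernel N u\<bar> \<le> 8 * real N / d"
proof (cases "d \<le> 2")
  case True
  then have "2 * real N \<le> 8 * real N / d"
    using assms by (simp add: field_simps)
  then show ?thesis using abs_dirichlet_kernel_le[OF assms(1), of u] by linarith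
next
  case False
  have "pi * (d - 1) \<le> real N * \<bar>u\<bar>"
    using assms(4) by (simp add: field_simps)
  moreover have "d \<le> pi * (d - 1)"
  proof -
    have "0 \<le> (pi - 1) * (d - 2)" using False pi_ge_two by simp
    then show ?thesis using pi_ge_two by (simp add: algebra_simps)
  qed
  ultimately have d: "d \<le> real N * \<bar>u\<bar>" by linarith
  obtain n where n: "N = Suc n" using assms(1) by (cases N) auto
  have "\<bar>dirichlet_kernel N u\<bar> * \<bar>sin (u / 2)\<bar> \<le> 1"
    using dirichlet_kernel_mult_sin[of n u] by (simp add: n flip: abs_mult)
  then have "\<bar>dirichlet_kernel N u\<bar> * (\<bar>u\<bar> / 8) \<le> 1"
    using abs_sin_half_ge[OF assms(2)] by (meson abs_ge_zero mult_left_mono order.trans)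
  moreover have u: "\<bar>u\<bar> > 0" using d assms(3) by (cases "u = 0") auto
  ultimately have "\<bar>dirichlet_kernel N u\<bar> \<le> 8 / \<bar>u\<bar>" by (simp add: field_simps)
  also have "\<dots> \<le> 8 * real N / d" using d u assms(3) by (simp add: field_simps)
  finally show ?thesis .
qed

section \<open>Interpolation at the Chebyshev angles\<close>

definition cheb_angle :: "nat \<Rightarrow> nat \<Rightarrow> real" where
  "cheb_angle N i = (2 * real i - 1) * pi / (2 * real N)"

lemma cheb_angle_bounds:
  assumes "1 \<le> i" "i \<le> N"
  shows "0 \<le> cheb_angle N i" "cheb_angle N i \<le> pi"
proof -
  show "0 \<le> cheb_angle N i" using assms by (simp add: cheb_angle_def)
  have "(2 * real i - 1) * pi \<le> (2 * real N) * pi" using assms by (intro mult_right_mono) auto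
  then show "cheb_angle N i \<le> pi" using assms by (simp add: cheb_angle_def divide_le_eq)
qed

lemma cheb_angle_scaled: "N \<ge> 1 \<Longrightarrow> real N * cheb_angle N i / pi = real i - 1 / 2"
  by (simp add: cheb_angle_def field_simps)

definition cheb_kernel :: "nat \<Rightarrow> real \<Rightarrow> real \<Rightarrow> real" where
  "cheb_kernel N t \<theta> = 1 + 2 * (\<Sum>j=1..<N. cos (real j * \<theta>) * cos (real j * t))"

lemma cheb_kernel_eq_dirichlet_kernel:
  "cheb_kernel N t \<theta> = (dirichlet_kernel N (t - \<theta>) + dirichlet_kernel N (t + \<theta>)) / 2"
proof -
  have pointwise: "cos (real j * \<theta>) * cos (real j * t)
      = (cos (real j * (t - \<theta>)) + cos (real j * (t + \<theta>))) / 2" for j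
    using cos_times_cos[of "real j * t" "real j * \<theta>"] by (simp add: algebra_simps)
  have "(\<Sum>j=1..<N. cos (real j * \<theta>) * cos (real j * t))
      = (\<Sum>j=1..<N. cos (real j * (t - \<theta>)) + cos (real j * (t + \<theta>))) / 2"
    unfolding pointwise sum_divide_distrib ..
  then show ?thesis
    unfolding cheb_kernel_def dirichlet_kernel_def sum.distrib by (simp add: field_simps)
qed

lemma abs_dirichlet_kernel_diff_cheb_angle_le:
  assumes "1 \<le> i" "i \<le> N" "0 \<le> t" "t \<le> pi"
  shows "\<bar>dirichlet_kernel N (t - cheb_angle N i)\<bar>
           \<le> 8 * real N / (\<bar>real N * t / pi + 1 / 2 - real i\<bar> + 1)"
proof -
  have "real N * (t - cheb_angle N i) / pi = real N * t / pi - real N * cheb_angle N i / pi"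
    by (simp add: diff_divide_distrib right_diff_distrib)
  then have "real N * (t - cheb_angle N i) / pi = real N * t / pi + 1 / 2 - real i"
    using cheb_angle_scaled[of N i] assms by simp
  moreover have "real N * \<bar>t - cheb_angle N i\<bar> / pi = \<bar>real N * (t - cheb_angle N i) / pi\<bar>"
    by (simp add: abs_mult abs_divide)
  ultimately have "real N * \<bar>t - cheb_angle N i\<bar> / pi = \<bar>real N * t / pi + 1 / 2 - real i\<bar>"
    by simp
  moreover have "\<bar>t - cheb_angle N i\<bar> \<le> pi"
    using cheb_angle_bounds[OF assms(1,2)] assms(3,4) by auto
  ultimately show ?thesis
    using assms by (intro abs_dirichlet_kernel_le_inverse) auto
qed

lemma abs_dirichlet_kernel_add_cheb_angle_le:
  assumes "1 \<le> i" "i \<le> N" "0 \<le> t" "t \<le> pi"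
  shows "\<bar>dirichlet_kernel N (t + cheb_angle N i)\<bar>
           \<le> 8 * real N / real i + 8 * real N / (real N + 1 - real i)"
proof -
  have \<theta>: "0 \<le> cheb_angle N i" "cheb_angle N i \<le> pi" "real N * cheb_angle N i / pi = real i - 1 / 2"
    using cheb_angle_bounds[OF assms(1,2)] cheb_angle_scaled[of N i] assms by auto
  have Nt: "0 \<le> real N * t / pi" "real N * t / pi \<le> real N"
    using assms by (simp_all add: field_simps)
  show ?thesis
  proof (cases "t + cheb_angle N i \<le> pi")
    case True
    have "\<bar>dirichlet_kernel N (t + cheb_angle N i)\<bar> \<le> 8 * real N / real i"
    proof (rule abs_dirichlet_kernel_le_inverse)
      have "real N * \<bar>t + cheb_angle N i\<bar> / pi = real N * t / pi + real N * cheb_angle N i / pi"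
        using \<theta> assms by (simp add: field_simps)
      then show "real i \<le> real N * \<bar>t + cheb_angle N i\<bar> / pi + 1" using \<theta> Nt by linarith
    qed (use True \<theta> assms in auto)
    moreover have "0 \<le> 8 * real N / (real N + 1 - real i)" using assms by simp
    ultimately show ?thesis by linarith
  next
    case False
    have "\<bar>dirichlet_kernel N (t + cheb_angle N i - 2 * pi)\<bar> \<le> 8 * real N / (real N + 1 - real i)"
    proof (rule abs_dirichlet_kernel_le_inverse)
      have "real N * \<bar>t + cheb_angle N i - 2 * pi\<bar> / pi
          = 2 * real N - real N * t / pi - real N * cheb_angle N i / pi"
        using \<theta> assms False by (simp add: field_simps)
      then show "real N + 1 - real i \<le> real N * \<bar>t + cheb_angle N i - 2 * pi\<bar> / pi + 1"
        using \<theta> Nt by linarith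
    qed (use False \<theta> assms in auto)
    moreover have "0 \<le> 8 * real N / real i" by simp
    ultimately show ?thesis using dirichlet_kernel_periodic[of N "t + cheb_angle N i"] by linarith
  qed
qed

lemma sum_abs_cheb_kernel_le:
  assumes "N \<ge> 1" "0 \<le> t" "t \<le> pi"
  shows "(\<Sum>i=1..N. \<bar>cheb_kernel N t (cheb_angle N i)\<bar>) \<le> 16 * real N * harm N"
proof -
  let ?s = "real N * t / pi + 1 / 2"
  have "(\<Sum>i=1..N. \<bar>cheb_kernel N t (cheb_angle N i)\<bar>)
      \<le> (\<Sum>i=1..N. 4 * real N * (1 / (\<bar>?s - real i\<bar> + 1) + 1 / real i + 1 / (real N + 1 - real i)))"
  proof (rule sum_mono)
    fix i assume i: "i \<in> {1..N}"
    have "\<bar>cheb_kernel N t (cheb_angle N i)\<bar>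
        \<le> (\<bar>dirichlet_kernel N (t - cheb_angle N i)\<bar> + \<bar>dirichlet_kernel N (t + cheb_angle N i)\<bar>) / 2"
      unfolding cheb_kernel_eq_dirichlet_kernel
      using abs_triangle_ineq[of "dirichlet_kernel N (t - cheb_angle N i)"
          "dirichlet_kernel N (t + cheb_angle N i)"]
      by simp
    also have "\<dots> \<le> (8 * real N / (\<bar>?s - real i\<bar> + 1)
        + (8 * real N / real i + 8 * real N / (real N + 1 - real i))) / 2"
      using abs_dirichlet_kernel_diff_cheb_angle_le[of i N t]
        abs_dirichlet_kernel_add_cheb_angle_le[of i N t] i assms by simp
    also have "\<dots> = 4 * real N * (1 / (\<bar>?s - real i\<bar> + 1) + 1 / real i + 1 / (real N + 1 - real i))"
      by (simp add: field_simps)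
    finally show "\<bar>cheb_kernel N t (cheb_angle N i)\<bar>
        \<le> 4 * real N * (1 / (\<bar>?s - real i\<bar> + 1) + 1 / real i + 1 / (real N + 1 - real i))" .
  qed
  also have "\<dots> = 4 * real N * ((\<Sum>i=1..N. 1 / (\<bar>?s - real i\<bar> + 1)) + harm N
      + (\<Sum>i=1..N. 1 / (real N + 1 - real i)))"
    by (simp add: harm_def inverse_eq_divide sum.distrib flip: sum_distrib_left)
  also have "\<dots> \<le> 4 * real N * (2 * harm N + harm N + harm N)"
    unfolding sum_inverse_rev_eq_harm
    using sum_inverse_dist_le_harm[of ?s N] by (intro mult_left_mono) auto
  finally show ?thesis by simp
qed

lemma sum_cos_odd_multiples:
  "2 * sin a * (\<Sum>i=1..n. cos ((2 * real i - 1) * a)) = sin (2 * real n * a)"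
proof (induction n)
  case 0
  then show ?case by simp
next
  case (Suc n)
  have "2 * sin a * cos ((2 * real (Suc n) - 1) * a)
      = sin ((2 * real (Suc n) - 1) * a + a) - sin ((2 * real (Suc n) - 1) * a - a)"
    by (simp add: sin_add sin_diff)
  also have "\<dots> = sin (2 * real (Suc n) * a) - sin (2 * real n * a)"
    by (simp add: algebra_simps)
  finally show ?case using Suc by (simp add: algebra_simps)
qed

lemma cos_of_int_abs: "cos (of_int \<bar>k\<bar> * x) = cos (of_int k * x)"
  by (simp add: abs_if)

lemma sum_cos_cheb_angle:
  fixes k :: int
  assumes "N \<ge> 1" "\<bar>k\<bar> < 2 * int N"
  shows "(\<Sum>i=1..N. cos (of_int k * cheb_angle N i)) = (if k = 0 then real N else 0)"
proof (cases "k = 0")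
  case False
  define a where "a = of_int \<bar>k\<bar> * pi / (2 * real N)"
  have "0 < a" "a < pi"
    using False assms by (simp_all add: a_def field_simps)
  then have "sin a > 0" by (rule sin_gt_zero)
  have "cos (of_int k * cheb_angle N i) = cos ((2 * real i - 1) * a)" for i
  proof -
    have "of_int \<bar>k\<bar> * cheb_angle N i = (2 * real i - 1) * a"
      by (simp add: cheb_angle_def a_def)
    then show ?thesis by (metis cos_of_int_abs)
  qed
  moreover have "sin (2 * real N * a) = 0"
    using assms(1) sin_npi_int[of "\<bar>k\<bar>"] by (simp add: a_def mult.commute)
  ultimately show ?thesis
    using sum_cos_odd_multiples[of a N] \<open>sin a > 0\<close> False by simp
qed simp

lemma sum_cos_mult_cos_cheb_angle:
  fixes k :: int
  assumes "N \<ge> 1" "\<bar>k\<bar> < int N" "1 \<le> j" "j < N"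
  shows "(\<Sum>i=1..N. cos (of_int k * cheb_angle N i) * cos (real j * cheb_angle N i))
       = (if j = nat \<bar>k\<bar> then real N / 2 else 0)"
proof -
  have pointwise: "cos (of_int k * x) * cos (real j * x)
      = (cos (of_int (k - int j) * x) + cos (of_int (k + int j) * x)) / 2" for x
    using cos_times_cos[of "of_int k * x" "real j * x"] by (simp add: left_diff_distrib distrib_right)
  have "(\<Sum>i=1..N. cos (of_int k * cheb_angle N i) * cos (real j * cheb_angle N i))
      = ((\<Sum>i=1..N. cos (of_int (k - int j) * cheb_angle N i))
         + (\<Sum>i=1..N. cos (of_int (k + int j) * cheb_angle N i))) / 2"
    by (simp only: pointwise sum.distrib flip: sum_divide_distrib)
  also have "\<dots> = ((if k = int j then real N else 0) + (if k = - int j then real N else 0)) / 2"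
  proof -
    have "(\<Sum>i=1..N. cos (of_int (k - int j) * cheb_angle N i)) = (if k - int j = 0 then real N else 0)"
      "(\<Sum>i=1..N. cos (of_int (k + int j) * cheb_angle N i)) = (if k + int j = 0 then real N else 0)"
      using assms by (intro sum_cos_cheb_angle; auto)+
    moreover have "k - int j = 0 \<longleftrightarrow> k = int j" "k + int j = 0 \<longleftrightarrow> k = - int j" by auto
    ultimately show ?thesis by simp
  qed
  also have "\<dots> = (if j = nat \<bar>k\<bar> then real N / 2 else 0)"
    using assms(3) by auto
  finally show ?thesis .
qed

(* In the variable cos t this is polynomial interpolation at the Chebyshev nodes. *)
definition cheb_interp :: "nat \<Rightarrow> (real \<Rightarrow> real) \<Rightarrow> real \<Rightarrow> real" where
  "cheb_interp N F t = (\<Sum>i=1..N. F (cheb_angle N i) * cheb_kernel N t (cheb_angle N i)) / real N"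

lemma cheb_interp_sum: "cheb_interp N (\<lambda>t. \<Sum>j\<in>J. F j t) t = (\<Sum>j\<in>J. cheb_interp N (F j) t)"
  unfolding cheb_interp_def sum_divide_distrib sum_distrib_right by (rule sum.swap)

lemma cheb_interp_cmult: "cheb_interp N (\<lambda>t. a * F t) t = a * cheb_interp N F t"
  by (simp add: cheb_interp_def sum_distrib_left mult.assoc)

lemma cheb_interp_suminf:
  assumes "\<And>\<theta>. summable (\<lambda>n. F n \<theta>)"
  shows "cheb_interp N (\<lambda>t. \<Sum>n. F n t) t = (\<Sum>n. cheb_interp N (F n) t)"
proof -
  have "(\<Sum>i=1..N. (\<Sum>n. F n (cheb_angle N i)) * cheb_kernel N t (cheb_angle N i))
      = (\<Sum>n. \<Sum>i=1..N. F n (cheb_angle N i) * cheb_kernel N t (cheb_angle N i))"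
    using assms by (simp add: suminf_sum summable_mult2 suminf_mult2)
  then show ?thesis
    using assms by (simp add: cheb_interp_def suminf_divide summable_sum summable_mult2)
qed

lemma cheb_interp_eq_cos_sum:
  "cheb_interp N F t = ((\<Sum>i=1..N. F (cheb_angle N i))
     + 2 * (\<Sum>j=1..<N. cos (real j * t) * (\<Sum>i=1..N. F (cheb_angle N i) * cos (real j * cheb_angle N i))))
     / real N"
proof -
  have "F \<theta> * cheb_kernel N t \<theta>
      = F \<theta> + 2 * (\<Sum>j=1..<N. cos (real j * t) * (F \<theta> * cos (real j * \<theta>)))" for \<theta>
    by (simp add: cheb_kernel_def algebra_simps sum_distrib_left)
  then have "(\<Sum>i=1..N. F (cheb_angle N i) * cheb_kernel N t (cheb_angle N i))
      = (\<Sum>i=1..N. F (cheb_angle N i))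
        + 2 * (\<Sum>i=1..N. \<Sum>j=1..<N.
                 cos (real j * t) * (F (cheb_angle N i) * cos (real j * cheb_angle N i)))"
    by (simp only: sum.distrib sum_distrib_left)
  also have "(\<Sum>i=1..N. \<Sum>j=1..<N.
                 cos (real j * t) * (F (cheb_angle N i) * cos (real j * cheb_angle N i)))
      = (\<Sum>j=1..<N. cos (real j * t) * (\<Sum>i=1..N. F (cheb_angle N i) * cos (real j * cheb_angle N i)))"
    by (subst sum.swap) (simp add: sum_distrib_left)
  finally show ?thesis by (simp add: cheb_interp_def)
qed

lemma cheb_interp_cos:
  fixes k :: int
  assumes "N \<ge> 1" "\<bar>k\<bar> < int N"
  shows "cheb_interp N (\<lambda>t. cos (of_int k * t)) t = cos (of_int k * t)"
proof -
  have "(\<Sum>j=1..<N. cos (real j * t) *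
            (\<Sum>i=1..N. cos (of_int k * cheb_angle N i) * cos (real j * cheb_angle N i)))
      = (\<Sum>j=1..<N. if j = nat \<bar>k\<bar> then real N / 2 * cos (of_int k * t) else 0)"
  proof (rule sum.cong[OF refl])
    fix j assume "j \<in> {1..<N}"
    then have "(\<Sum>i=1..N. cos (of_int k * cheb_angle N i) * cos (real j * cheb_angle N i))
        = (if j = nat \<bar>k\<bar> then real N / 2 else 0)"
      using assms by (intro sum_cos_mult_cos_cheb_angle) auto
    moreover have "cos (real (nat \<bar>k\<bar>) * t) = cos (of_int k * t)"
      using cos_of_int_abs[of k t] by simp
    ultimately show "cos (real j * t) *
          (\<Sum>i=1..N. cos (of_int k * cheb_angle N i) * cos (real j * cheb_angle N i))
        = (if j = nat \<bar>k\<bar> then real N / 2 * cos (of_int k * t) else 0)"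
      by auto
  qed
  moreover have "(\<Sum>i=1..N. cos (of_int k * cheb_angle N i)) = (if k = 0 then real N else 0)"
    using assms by (intro sum_cos_cheb_angle) auto
  ultimately show ?thesis
    using assms by (auto simp: cheb_interp_eq_cos_sum)
qed

lemma abs_cheb_interp_le:
  assumes "N \<ge> 1" "0 \<le> t" "t \<le> pi" "\<And>i. i \<in> {1..N} \<Longrightarrow> \<bar>F (cheb_angle N i)\<bar> \<le> M"
  shows "\<bar>cheb_interp N F t\<bar> \<le> 16 * harm N * M"
proof -
  have "\<bar>\<Sum>i=1..N. F (cheb_angle N i) * cheb_kernel N t (cheb_angle N i)\<bar>
      \<le> (\<Sum>i=1..N. M * \<bar>cheb_kernel N t (cheb_angle N i)\<bar>)"
    by (rule order.trans[OF sum_abs sum_mono]) (simp add: abs_mult assms(4) mult_right_mono)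
  also have "\<dots> \<le> M * (16 * real N * harm N)"
  proof -
    have "0 \<le> M" using assms(1) assms(4)[of 1] by auto
    then show ?thesis
      using sum_abs_cheb_kernel_le[OF assms(1-3)] by (simp add: mult_left_mono flip: sum_distrib_left)
  qed
  also have "\<dots> = 16 * harm N * M * real N" by simp
  finally show ?thesis
    using assms(1) by (simp add: cheb_interp_def abs_divide pos_divide_le_eq)
qed

section \<open>Low and high frequencies of powers\<close>

lemma one_plus_cos_half_power:
  "((1 + cos t) / 2) ^ n = (\<Sum>j\<le>2*n. real (2*n choose j) / 4 ^ n * cos (of_int (int j - int n) * t))"
proof -
  define z where "z = cis (t / 2)"
  have "z ^ j * cnj z ^ (2*n - j) = cis (of_int (int j - int n) * t)" if "j \<le> 2*n" for j
  proof -
    have "z ^ j * cnj z ^ (2*n - j) = cis (real j * (t / 2)) * cis (real (2*n - j) * (- t / 2))"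
      unfolding z_def cis_cnj Complex.DeMoivre by simp
    also have "\<dots> = cis (of_int (int j - int n) * t)"
      unfolding cis_mult using that by (simp add: of_nat_diff algebra_simps)
    finally show ?thesis .
  qed
  then have "(z + cnj z) ^ (2*n) = (\<Sum>j\<le>2*n. of_nat (2*n choose j) * cis (of_int (int j - int n) * t))"
    unfolding binomial_ring by (intro sum.cong) (simp_all add: mult.assoc)
  moreover have "z + cnj z = of_real (2 * cos (t / 2))"
    by (simp add: z_def complex_eq_iff)
  ultimately have "complex_of_real ((2 * cos (t / 2)) ^ (2*n))
      = (\<Sum>j\<le>2*n. of_nat (2*n choose j) * cis (of_int (int j - int n) * t))"
    by simp
  from arg_cong[where f = Re, OF this]
  have "(2 * cos (t / 2)) ^ (2*n) = (\<Sum>j\<le>2*n. real (2*n choose j) * cos (of_int (int j - int n) * t))"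
    by (simp add: Re_sum)
  moreover have "(2 * cos (t / 2)) ^ (2*n) = 4 ^ n * ((1 + cos t) / 2) ^ n"
    using cos_double_cos[of "t / 2"] by (simp add: power_mult power_mult_distrib)
  ultimately have "((1 + cos t) / 2) ^ n
      = (\<Sum>j\<le>2*n. real (2*n choose j) * cos (of_int (int j - int n) * t)) / 4 ^ n"
    by (simp add: eq_divide_eq mult.commute)
  then show ?thesis
    by (simp add: sum_divide_distrib)
qed

definition cheb_x :: "real \<Rightarrow> real \<Rightarrow> real" where
  "cheb_x c t = (1 + cos t) / (2 * (1 + c))"

lemma cheb_node_eq_cheb_x: "cheb_node c N i = cheb_x c (cheb_angle N i)"
  by (simp add: cheb_node_def cheb_x_def cheb_angle_def)

lemma cheb_x_eq: "cheb_x c t = ((1 + cos t) / 2) / (1 + c)"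
  by (simp add: cheb_x_def)

lemma cheb_x_bounds:
  assumes "c > -1"
  shows "0 \<le> cheb_x c t" "cheb_x c t \<le> 1 / (1 + c)"
proof -
  have "0 \<le> 1 + cos t" "1 + cos t \<le> 2"
    using cos_ge_minus_one[of t] cos_le_one[of t] by linarith+
  then have "0 \<le> (1 + cos t) / 2" "(1 + cos t) / 2 \<le> 1" by simp_all
  then show "0 \<le> cheb_x c t" "cheb_x c t \<le> 1 / (1 + c)"
    unfolding cheb_x_eq using assms divide_right_mono[of "(1 + cos t) / 2" 1 "1 + c"] by simp_all
qed

lemma cheb_x_arccos:
  assumes "c > -1" "0 \<le> x" "x \<le> 1 / (1 + c)"
  obtains t where "0 \<le> t" "t \<le> pi" "cheb_x c t = x"
proof
  have "0 \<le> (1 + c) * x" "(1 + c) * x \<le> 1"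
    using assms by (simp_all add: le_divide_eq mult.commute)
  then have y: "-1 \<le> 2 * ((1 + c) * x) - 1" "2 * ((1 + c) * x) - 1 \<le> 1" by linarith+
  then show "0 \<le> arccos (2 * ((1 + c) * x) - 1)" "arccos (2 * ((1 + c) * x) - 1) \<le> pi"
    by (simp_all add: arccos_lbound arccos_ubound)
  show "cheb_x c (arccos (2 * ((1 + c) * x) - 1)) = x"
    using y assms by (simp add: cheb_x_def cos_arccos field_simps)
qed

definition cheb_x_power_low :: "nat \<Rightarrow> real \<Rightarrow> nat \<Rightarrow> real \<Rightarrow> real" where
  "cheb_x_power_low P c n t = (\<Sum>j \<in> {..2*n} \<inter> {j. \<bar>int j - int n\<bar> < int P}.
     real (2*n choose j) / (4 * (1 + c)) ^ n * cos (of_int (int j - int n) * t))"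

definition cheb_x_power_high :: "nat \<Rightarrow> real \<Rightarrow> nat \<Rightarrow> real \<Rightarrow> real" where
  "cheb_x_power_high P c n t = (\<Sum>j \<in> {..2*n} - {j. \<bar>int j - int n\<bar> < int P}.
     real (2*n choose j) / (4 * (1 + c)) ^ n * cos (of_int (int j - int n) * t))"

lemma cheb_x_power_split: "cheb_x c t ^ n = cheb_x_power_low P c n t + cheb_x_power_high P c n t"
proof -
  have "cheb_x c t ^ n = ((1 + cos t) / 2) ^ n / (1 + c) ^ n"
    by (simp only: cheb_x_eq power_divide)
  also have "\<dots> = (\<Sum>j\<le>2*n.
      real (2*n choose j) / (4 ^ n * (1 + c) ^ n) * cos (of_int (int j - int n) * t))"
    unfolding one_plus_cos_half_power sum_divide_distrib by (intro sum.cong refl) simp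
  also have "\<dots> = (\<Sum>j\<le>2*n. real (2*n choose j) / (4 * (1 + c)) ^ n * cos (of_int (int j - int n) * t))"
    by (simp only: power_mult_distrib)
  also have "\<dots> = cheb_x_power_low P c n t + cheb_x_power_high P c n t"
    unfolding cheb_x_power_low_def cheb_x_power_high_def by (rule sum.Int_Diff) simp
  finally show ?thesis .
qed

lemma cheb_interp_cheb_x_power_low:
  assumes "P \<ge> 1"
  shows "cheb_interp P (cheb_x_power_low P c n) t = cheb_x_power_low P c n t"
  unfolding cheb_x_power_low_def cheb_interp_sum cheb_interp_cmult
proof (rule sum.cong[OF refl])
  fix j assume "j \<in> {..2*n} \<inter> {j. \<bar>int j - int n\<bar> < int P}"
  then show "real (2*n choose j) / (4 * (1 + c)) ^ n
        * cheb_interp P (\<lambda>t. cos (of_int (int j - int n) * t)) t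
      = real (2*n choose j) / (4 * (1 + c)) ^ n * cos (of_int (int j - int n) * t)"
    using cheb_interp_cos[OF assms, of "int j - int n" t] by simp
qed

lemma zeta_gt_one: "c > 0 \<Longrightarrow> zeta c > 1"
  by (simp add: zeta_def add_pos_nonneg)

lemma zeta_quadratic:
  assumes "c \<ge> 0"
  shows "zeta c ^ 2 + 1 = 2 * (c + 1) * zeta c"
proof -
  define q where "q = sqrt (c\<^sup>2 + 2 * c)"
  have "(c + 1 + q) ^ 2 + 1 = 2 * (c + 1) * (c + 1 + q) + (q * q - (c\<^sup>2 + 2 * c))"
    by (simp add: power2_eq_square algebra_simps)
  moreover have "q * q = c\<^sup>2 + 2 * c"
    using assms by (simp add: q_def)
  ultimately show ?thesis by (simp add: zeta_def flip: q_def)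
qed

lemma binomial_sum_pow_ratios:
  fixes z :: real
  assumes "z > 0"
  shows "(\<Sum>j\<le>2*n. real (2*n choose j) * (z ^ j / z ^ n + z ^ n / z ^ j)) = 2 * (z + 1) ^ (2*n) / z ^ n"
proof -
  have "(\<Sum>j\<le>2*n. real (2*n choose j) * (z ^ j / z ^ n + z ^ n / z ^ j))
      = (\<Sum>j\<le>2*n. real (2*n choose j) * z ^ j) / z ^ n
        + z ^ n * (\<Sum>j\<le>2*n. real (2*n choose j) * (1 / z) ^ j)"
    by (simp add: sum.distrib distrib_left sum_divide_distrib sum_distrib_left power_one_over ac_simps)
  also have "(\<Sum>j\<le>2*n. real (2*n choose j) * z ^ j) = (z + 1) ^ (2*n)"
    using binomial_ring[of z 1 "2*n"] by simp
  also have "(\<Sum>j\<le>2*n. real (2*n choose j) * (1 / z) ^ j) = (z + 1) ^ (2*n) / z ^ (2*n)"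
  proof -
    have "1 / z + 1 = (z + 1) / z" using assms by (simp add: field_simps)
    then show ?thesis using binomial_ring[of "1 / z" 1 "2*n"] by (simp add: power_divide)
  qed
  also have "z ^ (2*n) = z ^ n * z ^ n" by (metis mult_2 power_add)
  finally show ?thesis using assms by simp
qed

lemma pow_le_pow_ratio_sum:
  fixes z :: real
  assumes "1 \<le> z" "\<not> \<bar>int j - int n\<bar> < int P"
  shows "z ^ P \<le> z ^ j / z ^ n + z ^ n / z ^ j"
proof (cases "n \<le> j")
  case True
  then have "z ^ P \<le> z ^ (j - n)"
    using assms by (intro power_increasing) auto
  also have "\<dots> = z ^ j / z ^ n"
    using True assms by (simp add: power_diff)
  finally show ?thesis using assms by (simp add: add_increasing2)
next
  case False
  then have "z ^ P \<le> z ^ (n - j)"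
    using assms by (intro power_increasing) auto
  also have "\<dots> = z ^ n / z ^ j"
    using False assms by (simp add: power_diff)
  finally show ?thesis using assms by (simp add: add_increasing)
qed

lemma abs_cheb_x_power_high_le_pow:
  fixes z :: real
  assumes "c > -1" "1 \<le> z"
  shows "\<bar>cheb_x_power_high P c n t\<bar> \<le> 2 * ((z + 1) ^ 2 / (4 * (1 + c) * z)) ^ n / z ^ P"
proof -
  define b where "b j = real (2*n choose j) / (4 * (1 + c)) ^ n" for j
  have b: "b j \<ge> 0" for j using assms by (simp add: b_def)
  have "\<bar>cheb_x_power_high P c n t\<bar>
      \<le> (\<Sum>j \<in> {..2*n} - {j. \<bar>int j - int n\<bar> < int P}. b j * ((z ^ j / z ^ n + z ^ n / z ^ j) / z ^ P))"
    unfolding cheb_x_power_high_def b_def[symmetric]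
  proof (rule order.trans[OF sum_abs sum_mono])
    fix j assume "j \<in> {..2*n} - {j. \<bar>int j - int n\<bar> < int P}"
    then have "1 \<le> (z ^ j / z ^ n + z ^ n / z ^ j) / z ^ P"
      using pow_le_pow_ratio_sum[of z j n P] assms(2) by simp
    then have "\<bar>cos (of_int (int j - int n) * t)\<bar> \<le> (z ^ j / z ^ n + z ^ n / z ^ j) / z ^ P"
      using abs_cos_le_one order.trans by blast
    then show "\<bar>b j * cos (of_int (int j - int n) * t)\<bar>
        \<le> b j * ((z ^ j / z ^ n + z ^ n / z ^ j) / z ^ P)"
      unfolding abs_mult abs_of_nonneg[OF b] by (rule mult_left_mono[OF _ b])
  qed
  also have "\<dots> \<le> (\<Sum>j\<le>2*n. b j * ((z ^ j / z ^ n + z ^ n / z ^ j) / z ^ P))"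
    using b assms(2) by (intro sum_mono2) auto
  also have "\<dots> = (\<Sum>j\<le>2*n. real (2*n choose j) * (z ^ j / z ^ n + z ^ n / z ^ j))
      / ((4 * (1 + c)) ^ n * z ^ P)"
    unfolding sum_divide_distrib by (intro sum.cong refl) (simp add: b_def)
  also have "\<dots> = 2 * ((z + 1) ^ 2) ^ n / z ^ n / ((4 * (1 + c)) ^ n * z ^ P)"
    using assms(2) by (simp add: binomial_sum_pow_ratios power_mult)
  also have "\<dots> = 2 * ((z + 1) ^ 2 / (4 * (1 + c) * z)) ^ n / z ^ P"
    by (simp add: power_divide power_mult_distrib ac_simps)
  finally show ?thesis .
qed

definition decay_rate :: "real \<Rightarrow> real" where
  "decay_rate c = (c + 2) / (2 * (c + 1))"

lemma abs_cheb_x_power_high_le: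
  assumes "c > 0"
  shows "\<bar>cheb_x_power_high P c n t\<bar> \<le> 2 * decay_rate c ^ n / zeta c ^ P"
proof -
  have "(zeta c + 1) ^ 2 = 2 * (c + 2) * zeta c"
    using zeta_quadratic[of c] assms by (simp add: power2_eq_square algebra_simps)
  then have "(zeta c + 1) ^ 2 / (4 * (1 + c) * zeta c) = 2 * (c + 2) * zeta c / (4 * (1 + c) * zeta c)"
    by (rule arg_cong)
  also have "\<dots> = 2 * (c + 2) / (4 * (1 + c))"
    using zeta_gt_one[OF assms] by simp
  also have "\<dots> = decay_rate c"
    using assms by (simp add: decay_rate_def field_simps)
  finally have "(zeta c + 1) ^ 2 / (4 * (1 + c) * zeta c) = decay_rate c" .
  then show ?thesis
    using abs_cheb_x_power_high_le_pow[of c "zeta c" P n t] assms zeta_gt_one[OF assms] by simp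
qed

section \<open>The power series\<close>

lemma cheb_x_power_high_series_bound:
  assumes "c > 0" "(\<lambda>n. \<bar>gc (Suc n)\<bar> * decay_rate c ^ Suc n) sums S"
  shows "summable (\<lambda>n. gc (Suc n) * cheb_x_power_high P c (Suc n) t)"
    and "\<bar>\<Sum>n. gc (Suc n) * cheb_x_power_high P c (Suc n) t\<bar> \<le> 2 * S / zeta c ^ P"
proof -
  have bound: "norm (gc (Suc n) * cheb_x_power_high P c (Suc n) t)
      \<le> \<bar>gc (Suc n)\<bar> * decay_rate c ^ Suc n * (2 / zeta c ^ P)" for n
  proof -
    have "norm (gc (Suc n) * cheb_x_power_high P c (Suc n) t)
        \<le> \<bar>gc (Suc n)\<bar> * (2 * decay_rate c ^ Suc n / zeta c ^ P)"
      unfolding real_norm_def abs_mult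
      by (rule mult_left_mono[OF abs_cheb_x_power_high_le[OF assms(1)] abs_ge_zero])
    then show ?thesis by (simp add: ac_simps)
  qed
  have sums: "(\<lambda>n. \<bar>gc (Suc n)\<bar> * decay_rate c ^ Suc n * (2 / zeta c ^ P)) sums (S * (2 / zeta c ^ P))"
    using assms(2) by (rule sums_mult2)
  show "summable (\<lambda>n. gc (Suc n) * cheb_x_power_high P c (Suc n) t)"
    by (rule summable_comparison_test'[OF sums_summable[OF sums] bound])
  have "\<bar>\<Sum>n. gc (Suc n) * cheb_x_power_high P c (Suc n) t\<bar> \<le> S * (2 / zeta c ^ P)"
    using norm_suminf_le[OF bound sums_summable[OF sums]] sums_unique[OF sums] by simp
  then show "\<bar>\<Sum>n. gc (Suc n) * cheb_x_power_high P c (Suc n) t\<bar> \<le> 2 * S / zeta c ^ P"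
    by (simp add: mult.commute)
qed

lemma summable_g_series_cheb_x:
  assumes "c > 0" "summable (\<lambda>n. \<bar>gc (Suc n)\<bar> * decay_rate c ^ Suc n)"
  shows "summable (\<lambda>n. gc (Suc n) * cheb_x c t ^ Suc n)"
proof (rule summable_comparison_test'[OF assms(2)])
  fix n :: nat
  have "cheb_x c t \<le> decay_rate c"
    using cheb_x_bounds(2)[of c t] assms(1) by (simp add: decay_rate_def field_simps)
  then have "cheb_x c t ^ Suc n \<le> decay_rate c ^ Suc n"
    using cheb_x_bounds(1)[of c t] assms(1) by (intro power_mono) auto
  moreover have "norm (gc (Suc n) * cheb_x c t ^ Suc n) = \<bar>gc (Suc n)\<bar> * cheb_x c t ^ Suc n"
    using cheb_x_bounds(1)[of c t] assms(1) by (simp add: abs_mult)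
  ultimately show "norm (gc (Suc n) * cheb_x c t ^ Suc n) \<le> \<bar>gc (Suc n)\<bar> * decay_rate c ^ Suc n"
    by (simp only:) (rule mult_left_mono[OF _ abs_ge_zero])
qed

lemma g_series_cheb_x_split:
  assumes "c > 0" "summable (\<lambda>n. \<bar>gc (Suc n)\<bar> * decay_rate c ^ Suc n)"
  shows "summable (\<lambda>n. gc (Suc n) * cheb_x_power_low P c (Suc n) t)"
    and "g_series gc (cheb_x c t) = (\<Sum>n. gc (Suc n) * cheb_x_power_low P c (Suc n) t)
           + (\<Sum>n. gc (Suc n) * cheb_x_power_high P c (Suc n) t)"
proof -
  have high: "summable (\<lambda>n. gc (Suc n) * cheb_x_power_high P c (Suc n) t)"
    using cheb_x_power_high_series_bound(1)[OF assms(1) summable_sums[OF assms(2)]] .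
  have terms: "gc (Suc n) * cheb_x c t ^ Suc n
      = gc (Suc n) * cheb_x_power_low P c (Suc n) t + gc (Suc n) * cheb_x_power_high P c (Suc n) t"
    for n
    by (simp only: cheb_x_power_split[of c t "Suc n" P] distrib_left)
  have "summable (\<lambda>n. gc (Suc n) * cheb_x c t ^ Suc n - gc (Suc n) * cheb_x_power_high P c (Suc n) t)"
    by (rule summable_diff[OF summable_g_series_cheb_x[OF assms] high])
  then show low: "summable (\<lambda>n. gc (Suc n) * cheb_x_power_low P c (Suc n) t)"
    by (simp only: terms add_diff_cancel_right')
  show "g_series gc (cheb_x c t) = (\<Sum>n. gc (Suc n) * cheb_x_power_low P c (Suc n) t)
           + (\<Sum>n. gc (Suc n) * cheb_x_power_high P c (Suc n) t)"
    unfolding g_series_def terms using suminf_add[OF low high] by simp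
qed

lemma abs_g_series_le_nodes:
  assumes "c > 0" "P \<ge> 1"
    and "(\<lambda>n. \<bar>gc (Suc n)\<bar> * decay_rate c ^ Suc n) sums S"
    and "\<And>i. i \<in> {1..P} \<Longrightarrow> \<bar>g_series gc (cheb_node c P i)\<bar> \<le> \<epsilon>"
    and "0 \<le> x" "x \<le> 1 / (1 + c)"
  shows "\<bar>g_series gc x\<bar> \<le> 16 * harm P * (\<epsilon> + 2 * S / zeta c ^ P) + 2 * S / zeta c ^ P"
proof -
  define E where "E = 2 * S / zeta c ^ P"
  define h where "h t = (\<Sum>n. gc (Suc n) * cheb_x_power_low P c (Suc n) t)" for t
  define R where "R t = (\<Sum>n. gc (Suc n) * cheb_x_power_high P c (Suc n) t)" for t
  note summable = sums_summable[OF assms(3)]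
  have split: "g_series gc (cheb_x c t) = h t + R t" for t
    unfolding h_def R_def using g_series_cheb_x_split(2)[OF assms(1) summable] .
  have R: "\<bar>R t\<bar> \<le> E" for t
    unfolding R_def E_def using cheb_x_power_high_series_bound(2)[OF assms(1,3)] .
  have h_nodes: "\<bar>h (cheb_angle P i)\<bar> \<le> \<epsilon> + E" if "i \<in> {1..P}" for i
    using assms(4)[OF that] split[of "cheb_angle P i"] R[of "cheb_angle P i"]
    by (simp add: cheb_node_eq_cheb_x)
  have h_interp: "cheb_interp P h t = h t" for t
  proof -
    have "cheb_interp P h t = (\<Sum>n. cheb_interp P (\<lambda>t. gc (Suc n) * cheb_x_power_low P c (Suc n) t) t)"
      unfolding h_def by (rule cheb_interp_suminf) (rule g_series_cheb_x_split(1)[OF assms(1) summable])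
    also have "\<dots> = h t"
      unfolding h_def cheb_interp_cmult cheb_interp_cheb_x_power_low[OF assms(2)] ..
    finally show ?thesis .
  qed
  obtain t where t: "0 \<le> t" "t \<le> pi" "cheb_x c t = x"
    using cheb_x_arccos[of c x] assms(1,5,6) by auto
  have "\<bar>h t\<bar> \<le> 16 * harm P * (\<epsilon> + E)"
    using abs_cheb_interp_le[OF assms(2) t(1,2), of h] h_interp h_nodes by simp
  then show ?thesis
    using split[of t] R[of t] t(3) by (simp add: E_def)
qed

lemma abs_g_series_le_log_bound:
  assumes "c > 0" "P \<ge> 1" "\<epsilon> \<ge> 0" "S \<le> B"
    and "(\<lambda>n. \<bar>gc (Suc n)\<bar> * decay_rate c ^ Suc n) sums S"
    and "\<And>i. i \<in> {1..P} \<Longrightarrow> \<bar>g_series gc (cheb_node c P i)\<bar> \<le> \<epsilon>"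
    and "0 \<le> x" "x \<le> 1 / (1 + c)"
  shows "\<bar>g_series gc x\<bar> \<le> (16 + 34 * B * (zeta c - 1)) * (ln (real P + 1) + 1) *
           (\<epsilon> + zeta c powr (- real P) / (zeta c - 1))"
proof -
  define L where "L = ln (real P + 1) + 1"
  define T where "T = zeta c powr (- real P) / (zeta c - 1)"
  define Q where "Q = 2 * B * (zeta c - 1)"
  define E where "E = 2 * S / zeta c ^ P"
  have z: "zeta c > 1" using zeta_gt_one[OF assms(1)] .
  have "0 \<le> decay_rate c" using assms(1) by (simp add: decay_rate_def)
  then have "0 \<le> S" using sums_le[OF _ sums_zero assms(5)] by simp
  have "ln (real P) \<le> ln (real P + 1)" using assms(2) by simp
  then have "harm P \<le> L" using harm_le_ln_plus_one[OF assms(2)] by (simp add: L_def)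
  have "1 \<le> L" "0 \<le> T" "0 \<le> E" "0 \<le> Q"
    using z \<open>0 \<le> S\<close> assms(4) by (simp_all add: L_def T_def E_def Q_def)
  have "E \<le> Q * T"
  proof -
    have "Q * T = 2 * B / zeta c ^ P"
      using z by (simp add: Q_def T_def powr_minus powr_realpow field_simps)
    then show ?thesis using assms(4) z by (simp add: E_def divide_right_mono)
  qed
  have "\<bar>g_series gc x\<bar> \<le> 16 * harm P * (\<epsilon> + E) + E"
    unfolding E_def using abs_g_series_le_nodes[OF assms(1,2,5,6,7,8)] .
  also have "\<dots> \<le> 16 * L * (\<epsilon> + Q * T) + L * (Q * T)"
    using \<open>harm P \<le> L\<close> \<open>E \<le> Q * T\<close> \<open>0 \<le> E\<close> assms(3) harm_nonneg[of P]
      mult_right_mono[OF \<open>1 \<le> L\<close>, of "Q * T"] \<open>0 \<le> Q\<close> \<open>0 \<le> T\<close>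
    by (intro add_mono mult_mono) auto
  also have "\<dots> \<le> (16 + 17 * Q) * L * (\<epsilon> + T)"
  proof -
    have "0 \<le> 16 * L * T + 17 * Q * L * \<epsilon>"
      using \<open>1 \<le> L\<close> \<open>0 \<le> T\<close> \<open>0 \<le> Q\<close> assms(3) by simp
    then show ?thesis by (simp add: algebra_simps)
  qed
  finally show ?thesis by (simp add: L_def T_def Q_def algebra_simps)
qed

lemma summable_powr_mult_geometric:
  fixes q :: real
  assumes "0 < q" "q < 1"
  shows "summable (\<lambda>n. real n powr a * q ^ n)"
proof (rule summable_comparison_test_bigo)
  show "summable (\<lambda>n. norm (((1 + q) / 2) ^ n))"
    using assms by simp
  show "(\<lambda>n. real n powr a * q ^ n) \<in> O(\<lambda>n. ((1 + q) / 2) ^ n)"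
    using assms by real_asymp
qed

theorem mainTheorem6:
  fixes a C c :: real
  assumes "a > -1" and "C > 0" and "c > 0"
  shows "\<exists>D::real. \<forall>(gc::nat \<Rightarrow> real) (P::nat) (\<epsilon>::real).
           (\<forall>n\<ge>1. \<bar>gc n\<bar> \<le> C * real n powr a) \<and> P \<ge> 1 \<and> \<epsilon> > 0 \<and>
           (\<forall>i\<in>{1..P}. \<bar>g_series gc (cheb_node c P i)\<bar> < \<epsilon>)
           \<longrightarrow> (\<forall>x\<in>{0..1 / (1 + c)}.
                 \<bar>g_series gc x\<bar> \<le> D * (ln (real P + 1) + 1) *
                    (\<epsilon> + zeta c powr (- real P) / (zeta c - 1)))"
proof -
  let ?r = "decay_rate c"
  have r: "0 < ?r" "?r < 1" using assms(3) by (simp_all add: decay_rate_def)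
  define B where "B = (\<Sum>n. C * real (Suc n) powr a * ?r ^ Suc n)"
  have B: "summable (\<lambda>n. C * real (Suc n) powr a * ?r ^ Suc n)"
    using summable_mult[OF summable_powr_mult_geometric[OF r], of C a]
    by (subst summable_Suc_iff) (simp add: mult.assoc)
  show ?thesis
  proof (intro exI[of _ "16 + 34 * B * (zeta c - 1)"] allI impI ballI)
    fix gc P \<epsilon> x
    assume H: "(\<forall>n\<ge>1. \<bar>gc n\<bar> \<le> C * real n powr a) \<and> P \<ge> 1 \<and> \<epsilon> > 0 \<and>
      (\<forall>i\<in>{1..P}. \<bar>g_series gc (cheb_node c P i)\<bar> < \<epsilon>)" and x: "x \<in> {0..1 / (1 + c)}"
    have gc: "\<bar>gc (Suc n)\<bar> * ?r ^ Suc n \<le> C * real (Suc n) powr a * ?r ^ Suc n" for n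
      using H r by (intro mult_right_mono) auto
    have gc_summable: "summable (\<lambda>n. \<bar>gc (Suc n)\<bar> * ?r ^ Suc n)"
      using B by (rule summable_comparison_test') (use gc r in \<open>simp add: abs_mult\<close>)
    show "\<bar>g_series gc x\<bar> \<le> (16 + 34 * B * (zeta c - 1)) * (ln (real P + 1) + 1) *
        (\<epsilon> + zeta c powr (- real P) / (zeta c - 1))"
      using H x
      by (intro abs_g_series_le_log_bound[OF assms(3) _ _ suminf_le[OF gc gc_summable B, folded B_def]
            summable_sums[OF gc_summable]]) (auto intro: less_imp_le)
  qed
qed

end
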